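(* Let $g:\mathbb{R}^n\to\mathbb{R}^m$ be twice continuously differentiable, $K\subseteq\mathbb{R}^m$ closed, $C:=g^{-1}(K)$, $\bar x\in C$ and $d\in T_C(\bar x)$. Then $$T_C^2(\bar x;d)\subseteq\{w\mid \nabla g(\bar x)w+\nabla^2g(\bar x)(d,d)\in T_K^2(g(\bar x);\nabla g(\bar x)d)\},\qquad T_C^{''}(\bar x;d)\subseteq\{w\mid \nabla g(\bar x)w\in T_K^{''}(g(\bar x);\nabla g(\bar x)d)\}.$$ If in addition MSCQ holds at $\bar x$ in direction $d$ for the system $g(x)\in K$ with modulus $\kappa$, then both inclusions hold as equalities, and for all $w\in\mathbb{R}^n$ $$\mathrm{dist}(w,T_C^2(\bar x;d))\le\kappa\,\mathrm{dist}\big(\nabla g(\bar x)w+\nabla^2g(\bar x)(d,d),T_K^2(g(\bar x);\nabla g(\bar x)d)\big),$$ $$\mathrm{dist}(w,T_C^{''}(\bar x;d))\le\kappa\,\mathrm{dist}\big(\nabla g(\bar x)w,T_K^{''}(g(\bar x);\nabla g(\bar x)d)\big).$$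
   Context: $\nabla^2g(\bar x)(d,d):=(d^T\nabla^2g_1(\bar x)d,\dots,d^T\nabla^2g_m(\bar x)d)$. $T_S(\bar x)$ is the Bouligand tangent cone; $T_S^2(\bar x;d):=\{w\mid \exists t_k\downarrow 0,\ w_k\to w,\ \bar x+t_kd+\tfrac12 t_k^2w_k\in S\}$; $T_S^{''}(\bar x;d):=\{w\mid \exists (t_k,r_k)\downarrow(0,0),\ w_k\to w,\ t_k/r_k\to0,\ \bar x+t_kd+\tfrac12 t_kr_kw_k\in S\}$. Distance to the empty set is $+\infty$. Directional neighborhood $V_{\rho,\delta}(d):=\{w\in\delta B_{\mathbb{R}^n}\mid \|\,\|d\|w-\|w\|d\,\|\le\rho\|w\|\|d\|\}$. MSCQ at $\bar x$ in direction $d$ means there are $\rho,\delta,\kappa>0$ with $\mathrm{dist}(x,g^{-1}(K))\le\kappa\,\mathrm{dist}(g(x),K)$ for all $x\in\bar x+V_{\rho,\delta}(d)$; the modulus is the infimum of such $\kappa$. *)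

theory Defs
  imports "HOL-Analysis.Analysis"
begin

definition tangent_cone :: "'a::real_normed_vector set \<Rightarrow> 'a \<Rightarrow> 'a set" where
  "tangent_cone S x = {d. \<exists>t u. (\<forall>k. t k > 0) \<and> t \<longlonglongrightarrow> 0 \<and> u \<longlonglongrightarrow> d
       \<and> (\<forall>k. x + t k *\<^sub>R u k \<in> S)}"

definition second_order_tangent :: "'a::real_normed_vector set \<Rightarrow> 'a \<Rightarrow> 'a \<Rightarrow> 'a set" where
  "second_order_tangent S x d = {w. \<exists>t u. (\<forall>k. t k > 0) \<and> t \<longlonglongrightarrow> 0 \<and> u \<longlonglongrightarrow> w
       \<and> (\<forall>k. x + t k *\<^sub>R d + ((1/2) * (t k)\<^sup>2) *\<^sub>R u k \<in> S)}"

definition asymptotic_second_order_tangent :: "'a::real_normed_vector set \<Rightarrow> 'a \<Rightarrow> 'a \<Rightarrow> 'a set" where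
  "asymptotic_second_order_tangent S x d = {w. \<exists>t r u. (\<forall>k. t k > 0) \<and> (\<forall>k. r k > 0)
       \<and> t \<longlonglongrightarrow> 0 \<and> r \<longlonglongrightarrow> 0 \<and> (\<lambda>k. t k / r k) \<longlonglongrightarrow> 0 \<and> u \<longlonglongrightarrow> w
       \<and> (\<forall>k. x + t k *\<^sub>R d + ((1/2) * t k * r k) *\<^sub>R u k \<in> S)}"

definition edist_set :: "'a::metric_space \<Rightarrow> 'a set \<Rightarrow> ereal" where
  "edist_set x S = (if S = {} then \<infinity> else ereal (infdist x S))"

definition dir_nbhd :: "real \<Rightarrow> real \<Rightarrow> 'a::real_normed_vector \<Rightarrow> 'a set" where
  "dir_nbhd \<rho> \<delta> d = {w. norm w \<le> \<delta> \<and>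
       norm (norm d *\<^sub>R w - norm w *\<^sub>R d) \<le> \<rho> * norm w * norm d}"

text \<open>Set of constants kappa for which MSCQ holds at xbar in direction d for g(x) in K;
  MSCQ holds iff this set is nonempty, and the modulus is its infimum.\<close>
definition mscq_constants ::
  "('a::real_normed_vector \<Rightarrow> 'b::real_normed_vector) \<Rightarrow> 'b set \<Rightarrow> 'a \<Rightarrow> 'a \<Rightarrow> real set" where
  "mscq_constants g K xbar d = {\<kappa>. \<kappa> > 0 \<and> (\<exists>\<rho>>0. \<exists>\<delta>>0. \<forall>v\<in>dir_nbhd \<rho> \<delta> d.
       edist_set (xbar + v) (g -` K) \<le> ereal \<kappa> * edist_set (g (xbar + v)) K)}"

text \<open>Second derivative term nabla^2 g(x)(d,d), given the Hessians H i x of the components g_i.\<close>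
definition hess_quad :: "('m \<Rightarrow> real^'n^'n) \<Rightarrow> real^'n \<Rightarrow> real^'m" where
  "hess_quad H d = (\<chi> i. d \<bullet> (H i *v d))"

end

theory Submission
  imports Defs
begin

text \<open>
  Both second-order tangent sets consist of limits of directions \<open>u\<^sub>k\<close> with
  \<open>x\<^sub>0 + t\<^sub>k d + \<sigma>\<^sub>k u\<^sub>k \<in> C\<close>, where \<open>\<sigma>\<^sub>k = t\<^sub>k\<^sup>2/2\<close> for \<open>T\<^sup>2\<close> and
  \<open>\<sigma>\<^sub>k = t\<^sub>k r\<^sub>k/2\<close> with \<open>t\<^sub>k/r\<^sub>k \<rightarrow> 0\<close> for \<open>T''\<close>. By a second-order Taylor expansion,
  \<open>(g(x\<^sub>0 + t\<^sub>k d + \<sigma>\<^sub>k u\<^sub>k) - g(x\<^sub>0) - t\<^sub>k \<nabla>g(x\<^sub>0)d)/\<sigma>\<^sub>k\<close> tends to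
  \<open>\<nabla>g(x\<^sub>0)u + (c/2) \<nabla>\<^sup>2g(x\<^sub>0)(d,d)\<close>, where \<open>c = lim t\<^sub>k\<^sup>2/\<sigma>\<^sub>k\<close> is \<open>2\<close> resp. \<open>0\<close>;
  this gives the inclusions. Conversely, given \<open>z \<in> T\<^sub>K\<close> and any \<open>w\<close>, the points
  \<open>x\<^sub>0 + t\<^sub>k d + \<sigma>\<^sub>k w\<close> eventually lie in the directional neighbourhood where MSCQ holds, so
  their nearest points in \<open>C\<close> are at distance at most \<open>\<kappa> dist(g(\<cdot>), K) = \<sigma>\<^sub>k \<kappa> (|\<nabla>g(x\<^sub>0)w
  + (c/2) \<nabla>\<^sup>2g(x\<^sub>0)(d,d) - z| + o(1))\<close>. Rescaling by \<open>\<sigma>\<^sub>k\<close> and extracting a convergent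
  subsequence gives \<open>w' \<in> T\<^sub>C\<close> within that distance of \<open>w\<close>, which yields the equalities
  and the distance estimates.
\<close>

section \<open>Second-order expansion\<close>

lemma norm_matrix_vector_mult_le:
  fixes A :: "real^'n^'m"
  shows "norm (A *v x) \<le> norm A * norm x"
proof -
  have "norm (A *v x) = L2_set (\<lambda>i. \<bar>A $ i \<bullet> x\<bar>) UNIV"
    by (simp add: norm_vec_def matrix_vector_mul_component)
  also have "\<dots> \<le> L2_set (\<lambda>i. norm x * norm (A $ i)) UNIV"
    by (rule L2_set_mono) (simp_all add: Cauchy_Schwarz_ineq2[THEN order_trans] mult.commute)
  also have "\<dots> = norm x * norm A"
    by (simp add: L2_set_right_distrib norm_vec_def[of A])
  finally show ?thesis
    by (simp add: mult.commute)
qed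

lemma has_real_derivative_along_line:
  fixes f :: "'a::real_normed_vector \<Rightarrow> real"
  assumes "(f has_derivative f') (at (a + s *\<^sub>R h))"
  shows "((\<lambda>s. f (a + s *\<^sub>R h)) has_real_derivative f' h) (at s)"
proof -
  have "((\<lambda>s. a + s *\<^sub>R h) has_derivative (\<lambda>s. s *\<^sub>R h)) (at s)"
    by (auto intro!: derivative_eq_intros)
  from has_derivative_compose[OF this assms]
  have "((\<lambda>s. f (a + s *\<^sub>R h)) has_derivative (\<lambda>s. s * f' h)) (at s)"
    using linear_scale[OF has_derivative_linear[OF assms]] by (simp add: o_def)
  then show ?thesis
    by (simp add: has_field_derivative_def mult.commute[of _ "f' h"])
qed

lemma second_order_mean_value:
  fixes f :: "real^'n \<Rightarrow> real" and G :: "real^'n \<Rightarrow> real^'n" and Hf :: "real^'n \<Rightarrow> real^'n^'n"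
  assumes df: "\<And>x. (f has_derivative (\<lambda>h. G x \<bullet> h)) (at x)"
    and dG: "\<And>x. (G has_derivative (\<lambda>h. Hf x *v h)) (at x)"
  obtains s where "0 \<le> s" "s \<le> 1"
    and "f (a + h) = f a + G a \<bullet> h + (1/2) * (h \<bullet> (Hf (a + s *\<^sub>R h) *v h))"
proof -
  define D :: "nat \<Rightarrow> real \<Rightarrow> real" where
    "D = (\<lambda>m t. [f (a + t *\<^sub>R h), G (a + t *\<^sub>R h) \<bullet> h, h \<bullet> (Hf (a + t *\<^sub>R h) *v h)] ! m)"
  have derivs: "DERIV (D m) t :> D (Suc m) t" if "m < 2" for m t
  proof (cases "m = 0")
    case True
    then show ?thesis
      using has_real_derivative_along_line[OF df] by (simp add: D_def)
  next
    case False
    have "((\<lambda>y. G y \<bullet> h) has_derivative (\<lambda>k. (Hf (a + t *\<^sub>R h) *v k) \<bullet> h)) (at (a + t *\<^sub>R h))"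
      by (rule has_derivative_inner_left[OF dG])
    with False that show ?thesis
      using has_real_derivative_along_line by (fastforce simp: D_def inner_commute[of h])
  qed
  obtain s where "0 < s" "s < 1" "D 0 1 = (\<Sum>m<2. D m 0 / fact m) + D 2 s / 2"
    using Taylor[of 2 D "D 0" 0 1 0 1] derivs by auto
  then show ?thesis
    by (intro that[of s]) (auto simp: D_def numeral_2_eq_2)
qed

lemma second_order_remainder_scalar:
  fixes f :: "real^'n \<Rightarrow> real" and G :: "real^'n \<Rightarrow> real^'n" and Hf :: "real^'n \<Rightarrow> real^'n^'n"
  assumes df: "\<And>x. (f has_derivative (\<lambda>h. G x \<bullet> h)) (at x)"
    and dG: "\<And>x. (G has_derivative (\<lambda>h. Hf x *v h)) (at x)"
    and cont: "isCont Hf a" and "\<epsilon> > 0"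
  shows "eventually (\<lambda>h. \<bar>f (a + h) - f a - G a \<bullet> h - (1/2) * (h \<bullet> (Hf a *v h))\<bar> \<le> \<epsilon> * (norm h)\<^sup>2)
           (nhds 0)"
proof -
  obtain \<delta> where "\<delta> > 0" and \<delta>: "\<And>y. dist y a < \<delta> \<Longrightarrow> dist (Hf y) (Hf a) < 2 * \<epsilon>"
    using cont \<open>\<epsilon> > 0\<close> unfolding continuous_at_eps_delta by (metis mult_pos_pos zero_less_numeral)
  have "\<bar>f (a + h) - f a - G a \<bullet> h - (1/2) * (h \<bullet> (Hf a *v h))\<bar> \<le> \<epsilon> * (norm h)\<^sup>2"
    if "norm h < \<delta>" for h
  proof -
    obtain s where "0 \<le> s" "s \<le> 1"
      and taylor: "f (a + h) = f a + G a \<bullet> h + (1/2) * (h \<bullet> (Hf (a + s *\<^sub>R h) *v h))"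
      by (rule second_order_mean_value[OF df dG])
    define M where "M = Hf (a + s *\<^sub>R h) - Hf a"
    have "dist (a + s *\<^sub>R h) a \<le> norm h"
      using \<open>0 \<le> s\<close> \<open>s \<le> 1\<close> by (simp add: dist_norm mult_left_le_one_le)
    then have M: "norm M < 2 * \<epsilon>"
      using \<delta>[of "a + s *\<^sub>R h"] that by (simp add: M_def dist_norm)
    have "\<bar>f (a + h) - f a - G a \<bullet> h - (1/2) * (h \<bullet> (Hf a *v h))\<bar> = (1/2) * \<bar>h \<bullet> (M *v h)\<bar>"
      by (simp add: taylor M_def matrix_vector_mult_diff_rdistrib inner_diff_right
          flip: diff_divide_distrib)
    also have "\<dots> \<le> (1/2) * (norm h * (norm M * norm h))"
      using Cauchy_Schwarz_ineq2[of h "M *v h"] norm_matrix_vector_mult_le[of M h]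
      by (simp add: order_trans mult_left_mono)
    also have "\<dots> \<le> (1/2) * (norm h * (2 * \<epsilon> * norm h))"
      using M by (intro mult_left_mono mult_right_mono) auto
    also have "\<dots> = \<epsilon> * (norm h)\<^sup>2"
      by (simp add: power2_eq_square)
    finally show ?thesis .
  qed
  then show ?thesis
    using \<open>\<delta> > 0\<close> by (auto simp: eventually_nhds_metric dist_norm)
qed

lemma second_order_remainder:
  fixes g :: "real^'n \<Rightarrow> real^'m" and J :: "real^'n \<Rightarrow> real^'n^'m"
    and H :: "'m \<Rightarrow> real^'n \<Rightarrow> real^'n^'n"
  assumes deriv1: "\<And>x. (g has_derivative (\<lambda>h. J x *v h)) (at x)"
    and deriv2: "\<And>i x. ((\<lambda>y. J y $ i) has_derivative (\<lambda>h. H i x *v h)) (at x)"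
    and cont: "\<And>i. isCont (H i) a" and "\<epsilon> > 0"
  shows "eventually (\<lambda>h. norm (g (a + h) - g a - J a *v h - (1/2) *\<^sub>R hess_quad (\<lambda>i. H i a) h)
           \<le> \<epsilon> * (norm h)\<^sup>2) (nhds 0)"
proof -
  define \<epsilon>' where "\<epsilon>' = \<epsilon> / CARD('m)"
  have "\<epsilon>' > 0"
    using \<open>\<epsilon> > 0\<close> by (simp add: \<epsilon>'_def)
  have "eventually (\<lambda>h. \<bar>g (a + h) $ i - g a $ i - J a $ i \<bullet> h - (1/2) * (h \<bullet> (H i a *v h))\<bar>
          \<le> \<epsilon>' * (norm h)\<^sup>2) (nhds 0)" for i
  proof (rule second_order_remainder_scalar[OF _ deriv2 cont \<open>\<epsilon>' > 0\<close>])
    show "((\<lambda>y. g y $ i) has_derivative (\<lambda>h. J x $ i \<bullet> h)) (at x)" for x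
      using bounded_linear.has_derivative[OF bounded_linear_vec_nth deriv1]
      by (simp add: matrix_vector_mul_component)
  qed
  then show ?thesis
  proof (rule eventually_mono[OF eventually_all_finite])
    fix h
    assume comp: "\<forall>i. \<bar>g (a + h) $ i - g a $ i - J a $ i \<bullet> h - (1/2) * (h \<bullet> (H i a *v h))\<bar>
                    \<le> \<epsilon>' * (norm h)\<^sup>2"
    let ?R = "g (a + h) - g a - J a *v h - (1/2) *\<^sub>R hess_quad (\<lambda>i. H i a) h"
    have "norm ?R \<le> (\<Sum>i\<in>UNIV. \<bar>?R $ i\<bar>)"
      by (rule norm_le_l1_cart)
    also have "\<dots> \<le> (\<Sum>i\<in>(UNIV::'m set). \<epsilon>' * (norm h)\<^sup>2)"
      using comp by (intro sum_mono) (simp add: hess_quad_def matrix_vector_mul_component)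
    also have "\<dots> = \<epsilon> * (norm h)\<^sup>2"
      by (simp add: \<epsilon>'_def)
    finally show "norm ?R \<le> \<epsilon> * (norm h)\<^sup>2" .
  qed
qed

lemma hess_quad_scaleR: "hess_quad A (c *\<^sub>R v) = c\<^sup>2 *\<^sub>R hess_quad A v"
  by (simp add: hess_quad_def vec_eq_iff matrix_vector_mult_scaleR power2_eq_square)

lemma tendsto_hess_quad [tendsto_intros]:
  assumes "(v \<longlongrightarrow> v0) F"
  shows "((\<lambda>k. hess_quad A (v k)) \<longlongrightarrow> hess_quad A v0) F"
  unfolding hess_quad_def
  by (auto intro!: vec_tendstoI tendsto_inner assms
      bounded_linear.tendsto[OF matrix_vector_mul_bounded_linear])

lemma tendsto_quadratic_remainder:
  fixes R :: "'a::real_normed_vector \<Rightarrow> 'b::real_normed_vector"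
  assumes R: "\<And>\<epsilon>. \<epsilon> > 0 \<Longrightarrow> eventually (\<lambda>h. norm (R h) \<le> \<epsilon> * (norm h)\<^sup>2) (nhds 0)"
    and t: "t \<longlonglongrightarrow> 0" and w: "w \<longlonglongrightarrow> w0"
  shows "(\<lambda>k. (1 / (t k)\<^sup>2) *\<^sub>R R (t k *\<^sub>R w k)) \<longlonglongrightarrow> 0"
proof (rule tendstoI)
  fix e :: real
  assume "e > 0"
  define B where "B = norm w0 + 1"
  have "B > 0"
    by (simp add: B_def add_nonneg_pos)
  have bounded: "eventually (\<lambda>k. norm (w k) \<le> B) sequentially"
    using tendstoD[OF w zero_less_one]
  proof eventually_elim
    case (elim k)
    then show ?case
      using norm_triangle_ineq2[of "w k" w0] by (simp add: B_def dist_norm)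
  qed
  have "(\<lambda>k. t k *\<^sub>R w k) \<longlonglongrightarrow> 0"
    using tendsto_scaleR[OF t w] by simp
  moreover have "eventually (\<lambda>h. norm (R h) \<le> e / (2 * B\<^sup>2) * (norm h)\<^sup>2) (nhds 0)"
    using \<open>e > 0\<close> \<open>B > 0\<close> by (intro R) simp
  ultimately have small: "eventually (\<lambda>k. norm (R (t k *\<^sub>R w k))
                            \<le> e / (2 * B\<^sup>2) * (norm (t k *\<^sub>R w k))\<^sup>2) sequentially"
    by (rule filterlim_iff[THEN iffD1, rule_format])
  from bounded small
  show "eventually (\<lambda>k. dist ((1 / (t k)\<^sup>2) *\<^sub>R R (t k *\<^sub>R w k)) 0 < e) sequentially"
  proof eventually_elim
    case (elim k)
    have "norm ((1 / (t k)\<^sup>2) *\<^sub>R R (t k *\<^sub>R w k)) \<le> e / (2 * B\<^sup>2) * (norm (w k))\<^sup>2"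
    proof (cases "t k = 0")
      case False
      then show ?thesis
        using elim(2) by (simp add: field_simps)
    qed (use \<open>e > 0\<close> in simp)
    also have "\<dots> \<le> e / (2 * B\<^sup>2) * B\<^sup>2"
      using elim(1) \<open>e > 0\<close> by (intro mult_left_mono power_mono) auto
    also have "\<dots> < e"
      using \<open>e > 0\<close> \<open>B > 0\<close> by simp
    finally show ?case
      by simp
  qed
qed

lemma second_order_difference_quotient:
  fixes g :: "real^'n \<Rightarrow> real^'m" and J :: "real^'n \<Rightarrow> real^'n^'m"
    and H :: "'m \<Rightarrow> real^'n \<Rightarrow> real^'n^'n"
  assumes deriv1: "\<And>x. (g has_derivative (\<lambda>h. J x *v h)) (at x)"
    and deriv2: "\<And>i x. ((\<lambda>y. J y $ i) has_derivative (\<lambda>h. H i x *v h)) (at x)"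
    and cont: "\<And>i. isCont (H i) a"
    and nonzero: "\<And>k. t k \<noteq> 0" "\<And>k. \<sigma> k \<noteq> 0"
    and t: "t \<longlonglongrightarrow> 0" and \<sigma>: "(\<lambda>k. \<sigma> k / t k) \<longlonglongrightarrow> 0" and c: "(\<lambda>k. (t k)\<^sup>2 / \<sigma> k) \<longlonglongrightarrow> c"
    and u: "u \<longlonglongrightarrow> u0"
  shows "(\<lambda>k. (1 / \<sigma> k) *\<^sub>R (g (a + t k *\<^sub>R d + \<sigma> k *\<^sub>R u k) - g a - t k *\<^sub>R (J a *v d)))
           \<longlonglongrightarrow> J a *v u0 + (c / 2) *\<^sub>R hess_quad (\<lambda>i. H i a) d"
proof -
  txt \<open>Since \<open>t d + \<sigma> u = t w\<close> with \<open>w \<rightarrow> d\<close>, the Hessian term enters with weight \<open>t\<^sup>2/\<sigma>\<close>.\<close>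
  define R where "R h = g (a + h) - g a - J a *v h - (1/2) *\<^sub>R hess_quad (\<lambda>i. H i a) h" for h
  define w where "w k = d + (\<sigma> k / t k) *\<^sub>R u k" for k
  have tw: "t k *\<^sub>R w k = t k *\<^sub>R d + \<sigma> k *\<^sub>R u k" for k
    using nonzero by (simp add: w_def scaleR_add_right)
  have "g (a + t k *\<^sub>R d + \<sigma> k *\<^sub>R u k) - g a - t k *\<^sub>R (J a *v d)
      = \<sigma> k *\<^sub>R (J a *v u k) + ((t k)\<^sup>2 / 2) *\<^sub>R hess_quad (\<lambda>i. H i a) (w k) + R (t k *\<^sub>R w k)" for k
  proof -
    have "J a *v (t k *\<^sub>R w k) = t k *\<^sub>R (J a *v d) + \<sigma> k *\<^sub>R (J a *v u k)"
      by (simp add: tw matrix_vector_right_distrib matrix_vector_mult_scaleR)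
    then show ?thesis
      unfolding R_def hess_quad_scaleR by (simp add: tw algebra_simps)
  qed
  then have expand: "(1 / \<sigma> k) *\<^sub>R (g (a + t k *\<^sub>R d + \<sigma> k *\<^sub>R u k) - g a - t k *\<^sub>R (J a *v d))
      = J a *v u k + ((t k)\<^sup>2 / \<sigma> k / 2) *\<^sub>R hess_quad (\<lambda>i. H i a) (w k)
        + ((t k)\<^sup>2 / \<sigma> k) *\<^sub>R ((1 / (t k)\<^sup>2) *\<^sub>R R (t k *\<^sub>R w k))" for k
    using nonzero by (simp add: scaleR_add_right)
  have "w \<longlonglongrightarrow> d"
    unfolding w_def using tendsto_add[OF tendsto_const tendsto_scaleR[OF \<sigma> u]] by simp
  moreover have "\<And>\<epsilon>. \<epsilon> > 0 \<Longrightarrow> eventually (\<lambda>h. norm (R h) \<le> \<epsilon> * (norm h)\<^sup>2) (nhds 0)"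
    unfolding R_def by (rule second_order_remainder[OF deriv1 deriv2 cont])
  ultimately have "(\<lambda>k. J a *v u k + ((t k)\<^sup>2 / \<sigma> k / 2) *\<^sub>R hess_quad (\<lambda>i. H i a) (w k)
        + ((t k)\<^sup>2 / \<sigma> k) *\<^sub>R ((1 / (t k)\<^sup>2) *\<^sub>R R (t k *\<^sub>R w k)))
      \<longlonglongrightarrow> J a *v u0 + (c / 2) *\<^sub>R hess_quad (\<lambda>i. H i a) d + c *\<^sub>R 0"
    by (intro tendsto_intros c u tendsto_quadratic_remainder[OF _ t]
        bounded_linear.tendsto[OF matrix_vector_mul_bounded_linear]) simp_all
  then show ?thesis
    by (simp add: expand)
qed

section \<open>Metric subregularity in a direction\<close>

lemma direction_deviation_le:
  fixes d s :: "'a::real_normed_vector"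
  assumes "0 \<le> \<rho>" and small: "(2 + \<rho>) * norm s \<le> \<rho> * norm d"
  shows "norm (norm d *\<^sub>R (d + s) - norm (d + s) *\<^sub>R d) \<le> \<rho> * norm (d + s) * norm d"
proof -
  have "norm d *\<^sub>R (d + s) - norm (d + s) *\<^sub>R d = norm d *\<^sub>R s + (norm d - norm (d + s)) *\<^sub>R d"
    by (simp add: algebra_simps)
  then have "norm (norm d *\<^sub>R (d + s) - norm (d + s) *\<^sub>R d)
      \<le> norm d * norm s + \<bar>norm d - norm (d + s)\<bar> * norm d"
    by (metis norm_scaleR norm_triangle_ineq abs_norm_cancel)
  also have "\<dots> \<le> 2 * norm s * norm d"
  proof -
    have "\<bar>norm d - norm (d + s)\<bar> \<le> norm s"
      using norm_triangle_ineq3[of d "d + s"] by simp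
    from mult_right_mono[OF this norm_ge_zero[of d]] show ?thesis
      by (simp add: algebra_simps)
  qed
  also have "\<dots> \<le> \<rho> * (norm d - norm s) * norm d"
    using small by (intro mult_right_mono) (auto simp: algebra_simps)
  also have "\<dots> \<le> \<rho> * norm (d + s) * norm d"
    using norm_triangle_ineq2[of d "- s"] \<open>0 \<le> \<rho>\<close>
    by (intro mult_right_mono mult_left_mono) auto
  finally show ?thesis .
qed

lemma scaleR_mem_dir_nbhd:
  assumes "0 \<le> s" and "norm (s *\<^sub>R v) \<le> \<delta>"
    and "norm (norm d *\<^sub>R v - norm v *\<^sub>R d) \<le> \<rho> * norm v * norm d"
  shows "s *\<^sub>R v \<in> dir_nbhd \<rho> \<delta> d"
proof -
  have "norm d *\<^sub>R (s *\<^sub>R v) - norm (s *\<^sub>R v) *\<^sub>R d = s *\<^sub>R (norm d *\<^sub>R v - norm v *\<^sub>R d)"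
    using \<open>0 \<le> s\<close> by (simp add: algebra_simps)
  then have "norm (norm d *\<^sub>R (s *\<^sub>R v) - norm (s *\<^sub>R v) *\<^sub>R d) = s * norm (norm d *\<^sub>R v - norm v *\<^sub>R d)"
    using \<open>0 \<le> s\<close> by simp
  also have "\<dots> \<le> s * (\<rho> * norm v * norm d)"
    using assms by (simp add: mult_left_mono)
  also have "\<dots> = \<rho> * norm (s *\<^sub>R v) * norm d"
    using \<open>0 \<le> s\<close> by simp
  finally show ?thesis
    using assms(2) by (simp add: dir_nbhd_def)
qed

lemma eventually_mem_dir_nbhd:
  assumes "\<rho> > 0" "\<delta> > 0" and t: "\<And>k. t k \<ge> 0" "t \<longlonglongrightarrow> 0" and s: "s \<longlonglongrightarrow> 0"
  shows "eventually (\<lambda>k. t k *\<^sub>R (d + s k) \<in> dir_nbhd \<rho> \<delta> d) sequentially"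
proof -
  have "(\<lambda>k. t k *\<^sub>R (d + s k)) \<longlonglongrightarrow> 0"
    using tendsto_scaleR[OF t(2) tendsto_add[OF tendsto_const s]] by simp
  from tendstoD[OF this \<open>\<delta> > 0\<close>]
  have small: "eventually (\<lambda>k. norm (t k *\<^sub>R (d + s k)) \<le> \<delta>) sequentially"
    by eventually_elim simp
  have "eventually (\<lambda>k. norm (norm d *\<^sub>R (d + s k) - norm (d + s k) *\<^sub>R d)
          \<le> \<rho> * norm (d + s k) * norm d) sequentially"
  proof (cases "d = 0")
    case False
    then have "\<rho> * norm d / (2 + \<rho>) > 0"
      using \<open>\<rho> > 0\<close> by simp
    from tendstoD[OF s this]
    show ?thesis
    proof eventually_elim
      case (elim k)
      then have "(2 + \<rho>) * norm (s k) \<le> \<rho> * norm d"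
        using \<open>\<rho> > 0\<close> by (simp add: field_simps)
      then show ?case
        using direction_deviation_le[of \<rho> "s k" d] \<open>\<rho> > 0\<close> by simp
    qed
  qed simp
  with small show ?thesis
    by eventually_elim (use t(1) in \<open>simp add: scaleR_mem_dir_nbhd\<close>)
qed

lemma mscq_constantsE:
  assumes "\<kappa> \<in> mscq_constants g K xbar d"
  obtains \<rho> \<delta> where "\<kappa> > 0" "\<rho> > 0" "\<delta> > 0"
    and "\<forall>v\<in>dir_nbhd \<rho> \<delta> d. edist_set (xbar + v) (g -` K) \<le> ereal \<kappa> * edist_set (g (xbar + v)) K"
  using assms unfolding mscq_constants_def by blast

lemma infdist_le_of_mscq:
  assumes "\<forall>v\<in>dir_nbhd \<rho> \<delta> d. edist_set (xbar + v) (g -` K) \<le> ereal \<kappa> * edist_set (g (xbar + v)) K"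
    and "v \<in> dir_nbhd \<rho> \<delta> d" and "xbar \<in> g -` K"
  shows "infdist (xbar + v) (g -` K) \<le> \<kappa> * infdist (g (xbar + v)) K"
proof -
  have "edist_set (xbar + v) (g -` K) \<le> ereal \<kappa> * edist_set (g (xbar + v)) K"
    using assms(1,2) by blast
  moreover have "g -` K \<noteq> {}" "K \<noteq> {}"
    using assms(3) by auto
  ultimately show ?thesis
    by (simp add: edist_set_def)
qed

lemma mscq_nearest_points:
  fixes g :: "'a::euclidean_space \<Rightarrow> 'b::real_normed_vector"
  assumes closed: "closed (g -` K)" and xbar: "xbar \<in> g -` K"
    and "\<rho> > 0" "\<delta> > 0" "\<kappa> \<ge> 0"
    and mscq: "\<forall>v\<in>dir_nbhd \<rho> \<delta> d. edist_set (xbar + v) (g -` K) \<le> ereal \<kappa> * edist_set (g (xbar + v)) K"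
    and t: "\<And>k. t k > 0" "t \<longlonglongrightarrow> 0" and \<sigma>: "\<And>k. \<sigma> k > 0" "(\<lambda>k. \<sigma> k / t k) \<longlonglongrightarrow> 0"
    and zK: "\<And>k. g xbar + t k *\<^sub>R b + \<sigma> k *\<^sub>R z k \<in> K"
  obtains ws where "\<And>k. xbar + t k *\<^sub>R d + \<sigma> k *\<^sub>R ws k \<in> g -` K"
    and "eventually (\<lambda>k. norm (ws k - w) \<le> \<kappa> * norm ((1 / \<sigma> k) *\<^sub>R
           (g (xbar + t k *\<^sub>R d + \<sigma> k *\<^sub>R w) - g xbar - t k *\<^sub>R b) - z k)) sequentially"
proof -
  define x where "x k = xbar + t k *\<^sub>R d + \<sigma> k *\<^sub>R w" for k
  have "\<forall>k. \<exists>y\<in>g -` K. infdist (x k) (g -` K) = dist (x k) y"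
    using infdist_attains_inf[OF closed] xbar by (metis empty_iff)
  then obtain y where y: "\<And>k. y k \<in> g -` K"
    and dist_y: "\<And>k. infdist (x k) (g -` K) = dist (x k) (y k)"
    by metis
  define ws where "ws k = (1 / \<sigma> k) *\<^sub>R (y k - xbar - t k *\<^sub>R d)" for k
  have "xbar + t k *\<^sub>R d + \<sigma> k *\<^sub>R ws k \<in> g -` K" for k
    using y[of k] \<sigma>(1)[of k] by (simp add: ws_def)
  moreover
  have "eventually (\<lambda>k. infdist (x k) (g -` K) \<le> \<kappa> * infdist (g (x k)) K) sequentially"
    using eventually_mem_dir_nbhd[OF \<open>\<rho> > 0\<close> \<open>\<delta> > 0\<close> less_imp_le[OF t(1)] t(2)
        tendsto_scaleR[OF \<sigma>(2) tendsto_const, of w, simplified], of d]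
  proof eventually_elim
    case (elim k)
    have "x k = xbar + t k *\<^sub>R (d + (\<sigma> k / t k) *\<^sub>R w)"
      using t(1)[of k] by (simp add: x_def algebra_simps)
    then show ?case
      using infdist_le_of_mscq[OF mscq elim xbar] by simp
  qed
  then have "eventually (\<lambda>k. norm (ws k - w) \<le> \<kappa> * norm ((1 / \<sigma> k) *\<^sub>R
           (g (x k) - g xbar - t k *\<^sub>R b) - z k)) sequentially"
  proof eventually_elim
    case (elim k)
    let ?Q = "norm ((1 / \<sigma> k) *\<^sub>R (g (x k) - g xbar - t k *\<^sub>R b) - z k)"
    have "g (x k) - (g xbar + t k *\<^sub>R b + \<sigma> k *\<^sub>R z k)
        = \<sigma> k *\<^sub>R ((1 / \<sigma> k) *\<^sub>R (g (x k) - g xbar - t k *\<^sub>R b) - z k)"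
      using \<sigma>(1)[of k] by (simp add: algebra_simps)
    then have "infdist (g (x k)) K \<le> \<sigma> k * ?Q"
      using infdist_le[OF zK, of "g (x k)" k] \<sigma>(1)[of k] by (simp add: dist_norm)
    then have "dist (x k) (y k) \<le> \<sigma> k * (\<kappa> * ?Q)"
      using elim \<open>\<kappa> \<ge> 0\<close> dist_y[of k] by (smt (verit) mult_left_mono mult.left_commute)
    moreover have "ws k - w = (1 / \<sigma> k) *\<^sub>R (y k - x k)"
      using \<sigma>(1)[of k] by (simp add: ws_def x_def algebra_simps)
    ultimately show ?case
      using \<sigma>(1)[of k] by (simp add: dist_norm norm_minus_commute pos_divide_le_eq mult.commute)
  qed
  ultimately show ?thesis
    unfolding x_def by (rule that)
qed

lemma convergent_subsequence_near:
  fixes ws :: "nat \<Rightarrow> 'a::euclidean_space"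
  assumes near: "eventually (\<lambda>k. norm (ws k - w) \<le> a k) sequentially" and a: "a \<longlonglongrightarrow> a0"
  obtains \<phi> w' where "strict_mono \<phi>" "(ws \<circ> \<phi>) \<longlonglongrightarrow> w'" "norm (w' - w) \<le> a0"
proof -
  have "Bseq (\<lambda>k. norm w + a k)"
    using convergentI[OF tendsto_add[OF tendsto_const a]] by (rule convergent_imp_Bseq)
  moreover have "eventually (\<lambda>k. norm (ws k) \<le> norm (norm w + a k)) sequentially"
    using near
  proof eventually_elim
    case (elim k)
    have "norm (ws k) \<le> norm w + norm (ws k - w)"
      by (rule norm_triangle_sub)
    also have "\<dots> \<le> norm (norm w + a k)"
      using elim by simp
    finally show ?case .
  qed
  ultimately have "Bseq ws"
    by (rule Bseq_eventually_mono[rotated])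
  then obtain \<phi> w' where \<phi>: "strict_mono \<phi>" and lim: "(ws \<circ> \<phi>) \<longlonglongrightarrow> w'"
    using bounded_imp_convergent_subsequence by (metis Bseq_eq_bounded)
  have "norm (w' - w) \<le> a0"
  proof (rule tendsto_le[OF trivial_limit_sequentially])
    show "(\<lambda>k. norm ((ws \<circ> \<phi>) k - w)) \<longlonglongrightarrow> norm (w' - w)"
      using lim by (intro tendsto_intros)
    show "(a \<circ> \<phi>) \<longlonglongrightarrow> a0"
      using LIMSEQ_subseq_LIMSEQ[OF a \<phi>] .
    show "eventually (\<lambda>k. norm ((ws \<circ> \<phi>) k - w) \<le> (a \<circ> \<phi>) k) sequentially"
      using eventually_subseq[OF \<phi> near] by simp
  qed
  with \<phi> lim show ?thesis
    by (rule that)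
qed

lemma lipschitz_on_cball_of_continuous_derivative:
  fixes g :: "real^'n \<Rightarrow> real^'m" and J :: "real^'n \<Rightarrow> real^'n^'m"
  assumes deriv: "\<And>x. (g has_derivative (\<lambda>h. J x *v h)) (at x)" and cont: "continuous_on UNIV J"
  obtains L where "L-lipschitz_on (cball a r) g"
proof -
  have "compact (J ` cball a r)"
    using cont by (intro compact_continuous_image) (auto intro: continuous_on_subset)
  then obtain B where B: "\<And>x. x \<in> cball a r \<Longrightarrow> norm (J x) \<le> B"
    by (meson compact_imp_bounded bounded_iff imageI)
  have "(max B 0)-lipschitz_on (cball a r) g"
  proof (rule bounded_derivative_imp_lipschitz)
    show "(g has_derivative (\<lambda>h. J x *v h)) (at x within cball a r)" for x
      by (rule has_derivative_at_withinI[OF deriv])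
    show "onorm (\<lambda>h. J x *v h) \<le> max B 0" if "x \<in> cball a r" for x
    proof (rule onorm_le)
      show "norm (J x *v h) \<le> max B 0 * norm h" for h
        using norm_matrix_vector_mult_le[of "J x" h] B[OF that]
        by (meson max.cobounded1 mult_right_mono norm_ge_zero order_trans)
    qed
  qed auto
  then show ?thesis
    by (rule that)
qed

lemma mscq_constant_lipschitz_lower_bound:
  fixes g :: "'a::euclidean_space \<Rightarrow> 'b::real_normed_vector"
  assumes closed: "closed (g -` K)" and xbar: "xbar \<in> g -` K"
    and x: "x \<notin> g -` K" "dist x xbar \<le> 1"
    and bound: "infdist x (g -` K) \<le> \<kappa> * infdist (g x) K" and "\<kappa> \<ge> 0"
    and lip: "L-lipschitz_on (cball xbar 2) g"
  shows "1 \<le> \<kappa> * L"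
proof -
  obtain y where y: "y \<in> g -` K" and dist_y: "infdist x (g -` K) = dist x y"
    using infdist_attains_inf[OF closed] xbar by blast
  have pos: "infdist x (g -` K) > 0"
    using infdist_pos_not_in_closed[OF closed _ x(1)] xbar by blast
  have "dist x y \<le> dist x xbar"
    using infdist_le[OF xbar, of x] dist_y by simp
  then have "x \<in> cball xbar 2" "y \<in> cball xbar 2"
    using x(2) dist_triangle[of xbar y x] by (auto simp: dist_commute)
  then have "infdist (g x) K \<le> L * dist x y"
    using infdist_le[of "g y" K "g x"] y lipschitz_onD[OF lip] by fastforce
  then have "infdist x (g -` K) \<le> (\<kappa> * L) * infdist x (g -` K)"
    using bound \<open>\<kappa> \<ge> 0\<close> dist_y by (smt (verit) mult.assoc mult_left_mono)
  with pos show ?thesis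
    by simp
qed

lemma vimage_eq_and_edist_le_of_approximation:
  fixes TC :: "'a::real_normed_vector set" and TK :: "'b::real_normed_vector set" and E :: "'a \<Rightarrow> 'b"
  assumes "S \<noteq> {}" and S_pos: "\<And>\<kappa>. \<kappa> \<in> S \<Longrightarrow> \<kappa> > 0" and subset: "TC \<subseteq> {w. E w \<in> TK}"
    and approx: "\<And>\<kappa> w z. \<kappa> \<in> S \<Longrightarrow> z \<in> TK \<Longrightarrow> \<exists>w'\<in>TC. norm (w' - w) \<le> \<kappa> * norm (E w - z)"
    and empty: "TK = {} \<Longrightarrow> Inf S > 0"
  shows "TC = {w. E w \<in> TK}" and "edist_set w TC \<le> ereal (Inf S) * edist_set (E w) TK"
proof -
  obtain \<kappa>0 where "\<kappa>0 \<in> S"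
    using \<open>S \<noteq> {}\<close> by blast
  show "TC = {w. E w \<in> TK}"
  proof
    show "{w. E w \<in> TK} \<subseteq> TC"
    proof
      fix w
      assume "w \<in> {w. E w \<in> TK}"
      then obtain w' where "w' \<in> TC" "norm (w' - w) \<le> \<kappa>0 * norm (E w - E w)"
        using approx[OF \<open>\<kappa>0 \<in> S\<close>] by blast
      then show "w \<in> TC"
        by simp
    qed
  qed (rule subset)
  show "edist_set w TC \<le> ereal (Inf S) * edist_set (E w) TK"
  proof (cases "TK = {}")
    case True
    then show ?thesis
      using subset empty by (auto simp: edist_set_def)
  next
    case False
    then have "TC \<noteq> {}"
      using approx[OF \<open>\<kappa>0 \<in> S\<close>] by blast
    define X where "X = infdist w TC"
    define D where "D = infdist (E w) TK"
    have X_le: "X \<le> \<kappa> * D" if "\<kappa> \<in> S" for \<kappa>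
    proof -
      have "X / \<kappa> \<le> dist (E w) z" if z: "z \<in> TK" for z
      proof -
        obtain w' where "w' \<in> TC" "norm (w' - w) \<le> \<kappa> * norm (E w - z)"
          using approx[OF \<open>\<kappa> \<in> S\<close> z] by blast
        then have "X \<le> \<kappa> * dist (E w) z"
          unfolding X_def using infdist_le[of w' TC w] by (simp add: dist_norm norm_minus_commute)
        then show ?thesis
          using S_pos[OF \<open>\<kappa> \<in> S\<close>] by (simp add: field_simps)
      qed
      then have "X / \<kappa> \<le> D"
        unfolding D_def infdist_notempty[OF False] by (intro cINF_greatest[OF False])
      then show ?thesis
        using S_pos[OF \<open>\<kappa> \<in> S\<close>] by (simp add: field_simps)
    qed
    have "X \<le> Inf S * D"
    proof (cases "D = 0")
      case True
      then show ?thesis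
        using X_le[OF \<open>\<kappa>0 \<in> S\<close>] by simp
    next
      case False
      then have "D > 0"
        using infdist_nonneg[of "E w" TK] by (simp add: D_def)
      have "X / D \<le> Inf S"
        using X_le \<open>D > 0\<close> by (intro cInf_greatest[OF \<open>S \<noteq> {}\<close>]) (simp add: field_simps)
      then show ?thesis
        using \<open>D > 0\<close> by (simp add: field_simps)
    qed
    then show ?thesis
      using False \<open>TC \<noteq> {}\<close> by (simp add: edist_set_def X_def D_def)
  qed
qed

section \<open>Tangent sets along admissible scalings\<close>

definition tangent_set_along ::
  "((nat \<Rightarrow> real) \<Rightarrow> (nat \<Rightarrow> real) \<Rightarrow> bool) \<Rightarrow> 'a::real_normed_vector set \<Rightarrow> 'a \<Rightarrow> 'a \<Rightarrow> 'a set" where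
  "tangent_set_along P S x d =
     {w. \<exists>t \<sigma> u. P t \<sigma> \<and> u \<longlonglongrightarrow> w \<and> (\<forall>k. x + t k *\<^sub>R d + \<sigma> k *\<^sub>R u k \<in> S)}"

definition second_order_scaling :: "(nat \<Rightarrow> real) \<Rightarrow> (nat \<Rightarrow> real) \<Rightarrow> bool" where
  "second_order_scaling t \<sigma> \<longleftrightarrow> (\<forall>k. t k > 0) \<and> t \<longlonglongrightarrow> 0 \<and> \<sigma> = (\<lambda>k. (1/2) * (t k)\<^sup>2)"

definition asymptotic_scaling :: "(nat \<Rightarrow> real) \<Rightarrow> (nat \<Rightarrow> real) \<Rightarrow> bool" where
  "asymptotic_scaling t \<sigma> \<longleftrightarrow> (\<exists>r. (\<forall>k. t k > 0) \<and> (\<forall>k. r k > 0) \<and> t \<longlonglongrightarrow> 0 \<and> r \<longlonglongrightarrow> 0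
     \<and> (\<lambda>k. t k / r k) \<longlonglongrightarrow> 0 \<and> \<sigma> = (\<lambda>k. (1/2) * t k * r k))"

lemma second_order_tangent_eq_tangent_set_along:
  "second_order_tangent S x d = tangent_set_along second_order_scaling S x d"
  unfolding second_order_tangent_def tangent_set_along_def second_order_scaling_def by blast

lemma asymptotic_second_order_tangent_eq_tangent_set_along:
  "asymptotic_second_order_tangent S x d = tangent_set_along asymptotic_scaling S x d"
  unfolding asymptotic_second_order_tangent_def tangent_set_along_def asymptotic_scaling_def
  by blast

text \<open>\<open>c\<close> is the limit of \<open>t\<^sup>2/\<sigma>\<close>: \<open>2\<close> for \<open>T\<^sup>2\<close> and \<open>0\<close> for \<open>T''\<close>.\<close>

locale admissible_scaling =
  fixes P :: "(nat \<Rightarrow> real) \<Rightarrow> (nat \<Rightarrow> real) \<Rightarrow> bool" and c :: real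
  assumes exists: "\<exists>t \<sigma>. P t \<sigma>"
    and positive: "P t \<sigma> \<Longrightarrow> t k > 0 \<and> \<sigma> k > 0"
    and limits: "P t \<sigma> \<Longrightarrow> t \<longlonglongrightarrow> 0 \<and> (\<lambda>k. \<sigma> k / t k) \<longlonglongrightarrow> 0 \<and> (\<lambda>k. (t k)\<^sup>2 / \<sigma> k) \<longlonglongrightarrow> c"
    and subsequence: "P t \<sigma> \<Longrightarrow> strict_mono \<phi> \<Longrightarrow> P (t \<circ> \<phi>) (\<sigma> \<circ> \<phi>)"

lemma (in admissible_scaling) tangent_set_along_vimage_subset:
  fixes g :: "real^'n \<Rightarrow> real^'m" and J :: "real^'n \<Rightarrow> real^'n^'m"
    and H :: "'m \<Rightarrow> real^'n \<Rightarrow> real^'n^'n"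
  assumes deriv1: "\<And>x. (g has_derivative (\<lambda>h. J x *v h)) (at x)"
    and deriv2: "\<And>i x. ((\<lambda>y. J y $ i) has_derivative (\<lambda>h. H i x *v h)) (at x)"
    and cont: "\<And>i. isCont (H i) x"
  shows "tangent_set_along P (g -` K) x d \<subseteq>
    {w. J x *v w + (c / 2) *\<^sub>R hess_quad (\<lambda>i. H i x) d \<in> tangent_set_along P K (g x) (J x *v d)}"
proof
  fix w
  assume "w \<in> tangent_set_along P (g -` K) x d"
  then obtain t \<sigma> u where P: "P t \<sigma>" and u: "u \<longlonglongrightarrow> w"
    and mem: "\<And>k. g (x + t k *\<^sub>R d + \<sigma> k *\<^sub>R u k) \<in> K"
    unfolding tangent_set_along_def by auto
  define z where "z k = (1 / \<sigma> k) *\<^sub>R (g (x + t k *\<^sub>R d + \<sigma> k *\<^sub>R u k) - g x - t k *\<^sub>R (J x *v d))"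
    for k
  have "z \<longlonglongrightarrow> J x *v w + (c / 2) *\<^sub>R hess_quad (\<lambda>i. H i x) d"
  proof -
    have "t k \<noteq> 0" "\<sigma> k \<noteq> 0" for k
      using positive[OF P, of k] by simp_all
    then show ?thesis
      unfolding z_def using limits[OF P]
      by (intro second_order_difference_quotient[OF deriv1 deriv2 cont _ _ _ _ _ u]) auto
  qed
  moreover have "g x + t k *\<^sub>R (J x *v d) + \<sigma> k *\<^sub>R z k \<in> K" for k
    using mem[of k] positive[OF P, of k] by (simp add: z_def)
  ultimately show "w \<in> {w. J x *v w + (c / 2) *\<^sub>R hess_quad (\<lambda>i. H i x) d
                        \<in> tangent_set_along P K (g x) (J x *v d)}"
    unfolding tangent_set_along_def using P by blast
qed

lemma (in admissible_scaling) zero_mem_tangent_set_along: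
  assumes "\<tau> > 0" and ray: "\<And>s. 0 < s \<Longrightarrow> s \<le> \<tau> \<Longrightarrow> x + s *\<^sub>R d \<in> S"
  shows "0 \<in> tangent_set_along P S x d"
proof -
  obtain t \<sigma> where P: "P t \<sigma>"
    using exists by blast
  have "eventually (\<lambda>k. t k < \<tau>) sequentially"
    using order_tendstoD(2)[OF conjunct1[OF limits[OF P]] \<open>\<tau> > 0\<close>] .
  then obtain N where N: "\<And>k. k \<ge> N \<Longrightarrow> t k < \<tau>"
    unfolding eventually_sequentially by blast
  have "strict_mono (\<lambda>k. k + N)"
    by (simp add: strict_mono_def)
  from subsequence[OF P this]
  have "P (\<lambda>k. t (k + N)) (\<lambda>k. \<sigma> (k + N))"
    by (simp add: o_def)
  moreover have "x + t (k + N) *\<^sub>R d + \<sigma> (k + N) *\<^sub>R 0 \<in> S" for k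
    using ray[of "t (k + N)"] positive[OF P] N[of "k + N"] by simp
  ultimately show ?thesis
    unfolding tangent_set_along_def by blast
qed

lemma (in admissible_scaling) tangent_set_along_approximation:
  fixes g :: "real^'n \<Rightarrow> real^'m" and J :: "real^'n \<Rightarrow> real^'n^'m"
    and H :: "'m \<Rightarrow> real^'n \<Rightarrow> real^'n^'n"
  assumes deriv1: "\<And>x. (g has_derivative (\<lambda>h. J x *v h)) (at x)"
    and deriv2: "\<And>i x. ((\<lambda>y. J y $ i) has_derivative (\<lambda>h. H i x *v h)) (at x)"
    and cont: "\<And>i. isCont (H i) xbar"
    and closed: "closed (g -` K)" and xbar: "xbar \<in> g -` K"
    and \<kappa>: "\<kappa> \<in> mscq_constants g K xbar d"
    and z0: "z0 \<in> tangent_set_along P K (g xbar) (J xbar *v d)"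
  shows "\<exists>w'\<in>tangent_set_along P (g -` K) xbar d.
           norm (w' - w) \<le> \<kappa> * norm (J xbar *v w + (c / 2) *\<^sub>R hess_quad (\<lambda>i. H i xbar) d - z0)"
proof -
  obtain \<rho> \<delta> where "\<kappa> > 0" "\<rho> > 0" "\<delta> > 0"
    and mscq: "\<forall>v\<in>dir_nbhd \<rho> \<delta> d. edist_set (xbar + v) (g -` K) \<le> ereal \<kappa> * edist_set (g (xbar + v)) K"
    using \<kappa> by (rule mscq_constantsE)
  obtain t \<sigma> z where P: "P t \<sigma>" and z: "z \<longlonglongrightarrow> z0"
    and zK: "\<And>k. g xbar + t k *\<^sub>R (J xbar *v d) + \<sigma> k *\<^sub>R z k \<in> K"
    using z0 unfolding tangent_set_along_def by blast
  note t = conjunct1[OF positive[OF P]] conjunct1[OF limits[OF P]]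
  note \<sigma> = conjunct2[OF positive[OF P]] conjunct1[OF conjunct2[OF limits[OF P]]]
  obtain ws where mem: "\<And>k. xbar + t k *\<^sub>R d + \<sigma> k *\<^sub>R ws k \<in> g -` K"
    and near: "eventually (\<lambda>k. norm (ws k - w) \<le> \<kappa> * norm ((1 / \<sigma> k) *\<^sub>R
       (g (xbar + t k *\<^sub>R d + \<sigma> k *\<^sub>R w) - g xbar - t k *\<^sub>R (J xbar *v d)) - z k)) sequentially"
    using mscq_nearest_points[OF closed xbar \<open>\<rho> > 0\<close> \<open>\<delta> > 0\<close> less_imp_le[OF \<open>\<kappa> > 0\<close>] mscq t \<sigma> zK]
    by blast
  have "t k \<noteq> 0" "\<sigma> k \<noteq> 0" for k
    using t(1)[of k] \<sigma>(1)[of k] by simp_all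
  then have "(\<lambda>k. (1 / \<sigma> k) *\<^sub>R (g (xbar + t k *\<^sub>R d + \<sigma> k *\<^sub>R w) - g xbar - t k *\<^sub>R (J xbar *v d)))
      \<longlonglongrightarrow> J xbar *v w + (c / 2) *\<^sub>R hess_quad (\<lambda>i. H i xbar) d"
    using limits[OF P]
    by (intro second_order_difference_quotient[OF deriv1 deriv2 cont _ _ _ _ _ tendsto_const]) auto
  from tendsto_mult[OF tendsto_const tendsto_norm[OF tendsto_diff[OF this z]], of \<kappa>]
  obtain \<phi> w' where \<phi>: "strict_mono \<phi>" and lim: "(ws \<circ> \<phi>) \<longlonglongrightarrow> w'"
    and bound: "norm (w' - w) \<le> \<kappa> * norm (J xbar *v w + (c / 2) *\<^sub>R hess_quad (\<lambda>i. H i xbar) d - z0)"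
    by (rule convergent_subsequence_near[OF near])
  have "w' \<in> tangent_set_along P (g -` K) xbar d"
    unfolding tangent_set_along_def
    using subsequence[OF P \<phi>] lim mem by (intro CollectI exI[of _ "t \<circ> \<phi>"] exI[of _ "\<sigma> \<circ> \<phi>"]) auto
  with bound show ?thesis
    by blast
qed

text \<open>
  Needed when \<open>T\<^sub>K\<close> is empty: the distance estimate then reads \<open>\<infinity> \<le> \<kappa> \<cdot> \<infinity>\<close>, which
  fails in \<open>ereal\<close> for \<open>\<kappa> = 0\<close>.
\<close>

lemma (in admissible_scaling) Inf_mscq_constants_gt_0:
  fixes g :: "'a::euclidean_space \<Rightarrow> 'b::real_normed_vector"
  assumes closed: "closed (g -` K)" and xbar: "xbar \<in> g -` K"
    and lip: "L-lipschitz_on (cball xbar 2) g"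
    and nonempty: "mscq_constants g K xbar d \<noteq> {}"
    and not_tangent: "0 \<notin> tangent_set_along P (g -` K) xbar d"
  shows "Inf (mscq_constants g K xbar d) > 0"
proof -
  have lower: "1 \<le> \<kappa> * L" if \<kappa>: "\<kappa> \<in> mscq_constants g K xbar d" for \<kappa>
  proof -
    obtain \<rho> \<delta> where "\<kappa> > 0" "\<rho> > 0" "\<delta> > 0"
      and mscq: "\<forall>v\<in>dir_nbhd \<rho> \<delta> d. edist_set (xbar + v) (g -` K) \<le> ereal \<kappa> * edist_set (g (xbar + v)) K"
      using \<kappa> by (rule mscq_constantsE)
    define \<tau> where "\<tau> = min \<delta> 1 / (norm d + 1)"
    have "norm d + 1 > 0"
      by (simp add: add_nonneg_pos)
    then have "\<tau> > 0" and \<tau>: "\<tau> * (norm d + 1) = min \<delta> 1"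
      using \<open>\<delta> > 0\<close> by (simp_all add: \<tau>_def)
    then obtain s where s: "0 < s" "s \<le> \<tau>" and out: "xbar + s *\<^sub>R d \<notin> g -` K"
      using zero_mem_tangent_set_along not_tangent by blast
    have small: "norm (s *\<^sub>R d) \<le> min \<delta> 1"
      using s mult_mono[of s \<tau> "norm d" "norm d + 1"] by (simp add: \<tau>)
    then have "s *\<^sub>R d \<in> dir_nbhd \<rho> \<delta> d"
      using s(1) \<open>\<rho> > 0\<close> by (intro scaleR_mem_dir_nbhd) auto
    from infdist_le_of_mscq[OF mscq this xbar]
    show ?thesis
      using small \<open>\<kappa> > 0\<close>
      by (intro mscq_constant_lipschitz_lower_bound[OF closed xbar out _ _ _ lip]) (auto simp: dist_norm)
  qed
  obtain \<kappa>0 where \<kappa>0: "\<kappa>0 \<in> mscq_constants g K xbar d"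
    using nonempty by blast
  have "0 < \<kappa>0 * L"
    using lower[OF \<kappa>0] by simp
  moreover have "\<kappa>0 > 0"
    using \<kappa>0 by (simp add: mscq_constants_def)
  ultimately have "L > 0"
    by (rule zero_less_mult_pos)
  have "1 / L \<le> Inf (mscq_constants g K xbar d)"
    using lower \<open>L > 0\<close> by (intro cInf_greatest[OF nonempty]) (simp add: field_simps)
  with \<open>L > 0\<close> show ?thesis
    using order_less_le_trans[of 0 "1 / L"] by simp
qed

lemma (in admissible_scaling) tangent_set_along_vimage_eq:
  fixes g :: "real^'n \<Rightarrow> real^'m" and J :: "real^'n \<Rightarrow> real^'n^'m"
    and H :: "'m \<Rightarrow> real^'n \<Rightarrow> real^'n^'n"
  assumes deriv1: "\<And>x. (g has_derivative (\<lambda>h. J x *v h)) (at x)"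
    and deriv2: "\<And>i x. ((\<lambda>y. J y $ i) has_derivative (\<lambda>h. H i x *v h)) (at x)"
    and cont: "\<And>i. isCont (H i) xbar"
    and "closed K" and xbar: "xbar \<in> g -` K"
    and nonempty: "mscq_constants g K xbar d \<noteq> {}"
  shows "tangent_set_along P (g -` K) xbar d =
           {w. J xbar *v w + (c / 2) *\<^sub>R hess_quad (\<lambda>i. H i xbar) d
                 \<in> tangent_set_along P K (g xbar) (J xbar *v d)}"
    and "edist_set w (tangent_set_along P (g -` K) xbar d)
           \<le> ereal (Inf (mscq_constants g K xbar d))
              * edist_set (J xbar *v w + (c / 2) *\<^sub>R hess_quad (\<lambda>i. H i xbar) d)
                  (tangent_set_along P K (g xbar) (J xbar *v d))"
proof -
  have "continuous_on UNIV g"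
    using deriv1 by (intro continuous_at_imp_continuous_on ballI has_derivative_continuous)
  then have closed: "closed (g -` K)"
    by (rule closed_vimage[OF \<open>closed K\<close>])
  have "continuous_on UNIV (\<lambda>x. \<chi> i. J x $ i)"
    using deriv2 by (intro continuous_on_vec_lambda continuous_at_imp_continuous_on ballI
        has_derivative_continuous)
  then have "continuous_on UNIV J"
    by simp
  then obtain L where lip: "L-lipschitz_on (cball xbar 2) g"
    by (rule lipschitz_on_cball_of_continuous_derivative[OF deriv1])
  note subset = tangent_set_along_vimage_subset[OF deriv1 deriv2 cont, of K d]
  note approx = tangent_set_along_approximation[OF deriv1 deriv2 cont closed xbar]
  have S_pos: "\<kappa> > 0" if "\<kappa> \<in> mscq_constants g K xbar d" for \<kappa>
    using that by (simp add: mscq_constants_def)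
  have "Inf (mscq_constants g K xbar d) > 0"
    if "tangent_set_along P K (g xbar) (J xbar *v d) = {}"
  proof (rule Inf_mscq_constants_gt_0[OF closed xbar lip nonempty])
    show "0 \<notin> tangent_set_along P (g -` K) xbar d"
      using subsetD[OF subset] that by fastforce
  qed
  note result = vimage_eq_and_edist_le_of_approximation[OF nonempty S_pos subset approx this]
  show "tangent_set_along P (g -` K) xbar d =
           {w. J xbar *v w + (c / 2) *\<^sub>R hess_quad (\<lambda>i. H i xbar) d
                 \<in> tangent_set_along P K (g xbar) (J xbar *v d)}"
    by (rule result(1))
  show "edist_set w (tangent_set_along P (g -` K) xbar d)
           \<le> ereal (Inf (mscq_constants g K xbar d))
              * edist_set (J xbar *v w + (c / 2) *\<^sub>R hess_quad (\<lambda>i. H i xbar) d)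
                  (tangent_set_along P K (g xbar) (J xbar *v d))"
    by (rule result(2))
qed

interpretation second_order: admissible_scaling second_order_scaling 2
proof
  show "\<exists>t \<sigma>. second_order_scaling t \<sigma>"
    using LIMSEQ_Suc[OF lim_const_over_n[of 1]]
    by (intro exI[of _ "\<lambda>k. 1 / Suc k"] exI[of _ "\<lambda>k. (1/2) * (1 / Suc k)\<^sup>2"])
      (auto simp: second_order_scaling_def)
  fix t \<sigma> :: "nat \<Rightarrow> real" and j
  assume P: "second_order_scaling t \<sigma>"
  then have t: "t k > 0" for k
    by (simp add: second_order_scaling_def)
  from P have "t \<longlonglongrightarrow> 0" and \<sigma>: "\<sigma> = (\<lambda>k. (1/2) * (t k)\<^sup>2)"
    by (simp_all add: second_order_scaling_def)
  show "t j > 0 \<and> \<sigma> j > 0"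
    using t[of j] by (simp add: \<sigma>)
  have "t k \<noteq> 0" for k
    using t[of k] by simp
  then have "(\<lambda>k. \<sigma> k / t k) = (\<lambda>k. t k / 2)" "(\<lambda>k. (t k)\<^sup>2 / \<sigma> k) = (\<lambda>k. 2)"
    by (simp_all add: \<sigma> power2_eq_square)
  then show "t \<longlonglongrightarrow> 0 \<and> (\<lambda>k. \<sigma> k / t k) \<longlonglongrightarrow> 0 \<and> (\<lambda>k. (t k)\<^sup>2 / \<sigma> k) \<longlonglongrightarrow> 2"
    using \<open>t \<longlonglongrightarrow> 0\<close> tendsto_divide[OF \<open>t \<longlonglongrightarrow> 0\<close> tendsto_const[of 2]] by simp
  show "strict_mono \<phi> \<Longrightarrow> second_order_scaling (t \<circ> \<phi>) (\<sigma> \<circ> \<phi>)" for \<phi>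
    using t LIMSEQ_subseq_LIMSEQ[OF \<open>t \<longlonglongrightarrow> 0\<close>] by (auto simp: second_order_scaling_def \<sigma>)
qed

interpretation asymptotic: admissible_scaling asymptotic_scaling 0
proof
  define r :: "nat \<Rightarrow> real" where "r k = 1 / Suc k" for k
  have r0: "r \<longlonglongrightarrow> 0"
    unfolding r_def using LIMSEQ_Suc[OF lim_const_over_n[of 1]] by simp
  have r_pos: "r k > 0" for k
    by (simp add: r_def)
  have "asymptotic_scaling (\<lambda>k. (r k)\<^sup>2) (\<lambda>k. (1/2) * (r k)\<^sup>2 * r k)"
    unfolding asymptotic_scaling_def
  proof (intro exI[of _ r] conjI allI)
    show "(\<lambda>k. (r k)\<^sup>2 / r k) \<longlonglongrightarrow> 0"
      using r0 r_pos by (simp add: power2_eq_square)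
    show "(\<lambda>k. (r k)\<^sup>2) \<longlonglongrightarrow> 0"
      using tendsto_power[OF r0, of 2] by simp
  qed (use r0 r_pos r_pos[THEN less_imp_neq, THEN not_sym] in simp_all)
  then show "\<exists>t \<sigma>. asymptotic_scaling t \<sigma>"
    by blast
  fix t \<sigma> :: "nat \<Rightarrow> real" and j
  assume "asymptotic_scaling t \<sigma>"
  then obtain r where t: "\<And>k. t k > 0" and r: "\<And>k. r k > 0" and "t \<longlonglongrightarrow> 0" "r \<longlonglongrightarrow> 0"
    and tr: "(\<lambda>k. t k / r k) \<longlonglongrightarrow> 0" and \<sigma>: "\<sigma> = (\<lambda>k. (1/2) * t k * r k)"
    unfolding asymptotic_scaling_def by blast
  show "t j > 0 \<and> \<sigma> j > 0"
    using t r by (simp add: \<sigma>)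
  have "t k \<noteq> 0" "r k \<noteq> 0" for k
    using t[of k] r[of k] by simp_all
  then have "(\<lambda>k. \<sigma> k / t k) = (\<lambda>k. r k / 2)" "(\<lambda>k. (t k)\<^sup>2 / \<sigma> k) = (\<lambda>k. 2 * (t k / r k))"
    by (simp_all add: \<sigma> power2_eq_square fun_eq_iff)
  then show "t \<longlonglongrightarrow> 0 \<and> (\<lambda>k. \<sigma> k / t k) \<longlonglongrightarrow> 0 \<and> (\<lambda>k. (t k)\<^sup>2 / \<sigma> k) \<longlonglongrightarrow> 0"
    using \<open>t \<longlonglongrightarrow> 0\<close> \<open>r \<longlonglongrightarrow> 0\<close> tendsto_mult_right_zero[OF tr, of 2]
      tendsto_divide[OF \<open>r \<longlonglongrightarrow> 0\<close> tendsto_const[of 2]] by simp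
  show "asymptotic_scaling (t \<circ> \<phi>) (\<sigma> \<circ> \<phi>)" if "strict_mono \<phi>" for \<phi>
    unfolding asymptotic_scaling_def
  proof (intro exI[of _ "r \<circ> \<phi>"] conjI allI)
    show "(\<lambda>k. (t \<circ> \<phi>) k / (r \<circ> \<phi>) k) \<longlonglongrightarrow> 0"
      using LIMSEQ_subseq_LIMSEQ[OF tr that] by (simp add: o_def)
  qed (use t r \<open>t \<longlonglongrightarrow> 0\<close> \<open>r \<longlonglongrightarrow> 0\<close> that in \<open>auto simp: \<sigma> intro: LIMSEQ_subseq_LIMSEQ\<close>)
qed

theorem proposition2p7:
  fixes g :: "real^'n \<Rightarrow> real^'m"
    and J :: "real^'n \<Rightarrow> real^'n^'m"
    and H :: "'m \<Rightarrow> real^'n \<Rightarrow> real^'n^'n"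
    and K :: "(real^'m) set"
    and xbar d :: "real^'n"
    and \<kappa> :: real
  assumes deriv1: "\<And>x. (g has_derivative (\<lambda>h. J x *v h)) (at x)"
    and deriv2: "\<And>i x. ((\<lambda>y. J y $ i) has_derivative (\<lambda>h. H i x *v h)) (at x)"
    and contH: "\<And>i. continuous_on UNIV (H i)"
    and closedK: "closed K"
    and xbar: "xbar \<in> g -` K"
    and d: "d \<in> tangent_cone (g -` K) xbar"
  shows "second_order_tangent (g -` K) xbar d \<subseteq>
           {w. J xbar *v w + hess_quad (\<lambda>i. H i xbar) d
                 \<in> second_order_tangent K (g xbar) (J xbar *v d)}
       \<and> asymptotic_second_order_tangent (g -` K) xbar d \<subseteq>
           {w. J xbar *v w \<in> asymptotic_second_order_tangent K (g xbar) (J xbar *v d)}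
       \<and> ((mscq_constants g K xbar d \<noteq> {} \<and> \<kappa> = Inf (mscq_constants g K xbar d)) \<longrightarrow>
            (second_order_tangent (g -` K) xbar d =
               {w. J xbar *v w + hess_quad (\<lambda>i. H i xbar) d
                     \<in> second_order_tangent K (g xbar) (J xbar *v d)}
           \<and> asymptotic_second_order_tangent (g -` K) xbar d =
               {w. J xbar *v w \<in> asymptotic_second_order_tangent K (g xbar) (J xbar *v d)}
           \<and> (\<forall>w. edist_set w (second_order_tangent (g -` K) xbar d)
                  \<le> ereal \<kappa> * edist_set (J xbar *v w + hess_quad (\<lambda>i. H i xbar) d)
                                (second_order_tangent K (g xbar) (J xbar *v d)))
           \<and> (\<forall>w. edist_set w (asymptotic_second_order_tangent (g -` K) xbar d)
                  \<le> ereal \<kappa> * edist_set (J xbar *v w)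
                                (asymptotic_second_order_tangent K (g xbar) (J xbar *v d)))))"
proof -
  have cont: "isCont (H i) xbar" for i
    using contH continuous_on_eq_continuous_at by blast
  note second_order.tangent_set_along_vimage_subset[OF deriv1 deriv2 cont, of K d]
    asymptotic.tangent_set_along_vimage_subset[OF deriv1 deriv2 cont, of K d]
  moreover note second_order.tangent_set_along_vimage_eq[OF deriv1 deriv2 cont closedK xbar]
    asymptotic.tangent_set_along_vimage_eq[OF deriv1 deriv2 cont closedK xbar]
  ultimately show ?thesis
    unfolding second_order_tangent_eq_tangent_set_along
      asymptotic_second_order_tangent_eq_tangent_set_along
    by simp
qed

end
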